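(* Let $\alpha\neq 0$ be a real number and let $S$ be an $\alpha$-singular maximal surface of $\mathbb L^3$ which is invariant under the one-parameter group of translations $\{p\mapsto p+t\vec v: t\in\mathbb R\}$ generated by a unit vector $\vec v$, so that $S$ is parametrized as $X(s,t)=\gamma(s)+t\vec v$ with generatrix $\gamma$ a planar spacelike curve with nonzero curvature, contained in a plane orthogonal to $\vec v$ (the unit normal of $S$ being taken as the normal $\mathbf n=\gamma'\times\vec v$ of $\gamma$). Then $\vec v$ is horizontal (i.e. parallel to the $xy$-plane), $\gamma$ is contained in a (vertical) plane orthogonal to $\vec v$, and $\gamma$, viewed as a planar curve of this plane identified with $\mathbb L^2$ (with the $z$-axis of $\mathbb L^3$ corresponding to the $y$-axis of $\mathbb L^2$), satisfies $$\kappa=-\alpha\frac{\langle \mathbf n,(0,1)\rangle}{y}.$$ Conversely, if $\gamma$ is a curve in $\mathbb L^2$ satisfying this equation and it is embedded in the $xz$-plane of $\mathbb L^3$ (identifying $\mathbb L^2$ with the $xz$-plane, its $y$-axis with the $z$-axis), then the surface $X(s,t)=\gamma(s)+t(0,1,0)$ is an $\alpha$-singular maximal surface.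
   Context: $\mathbb L^3$ is $\mathbb R^3$ with the Lorentzian metric $\langle\cdot,\cdot\rangle=dx^2+dy^2-dz^2$; $\mathbb L^2$ is $\mathbb R^2$ with metric $dx^2-dy^2$. A surface is spacelike if its induced metric is Riemannian; its unit normal $N$ is then timelike. The mean curvature $H$ is the trace of the second fundamental form (sum of principal curvatures) with respect to $N$. For $\alpha\neq0$, an $\alpha$-singular maximal surface is a spacelike surface $S$ in the halfspace $z>0$ satisfying $H(p)=\alpha\frac{\langle N(p),\vec a\rangle}{\langle p,\vec a\rangle}=-\alpha\frac{\langle N(p),\vec a\rangle}{z}$ for all $p\in S$, where $\vec a=(0,0,1)$ and $N$ is a unit normal field. For a spacelike curve $\gamma$ in the halfplane $y>0$ of $\mathbb L^2$ parametrized by arc length, the curvature $\kappa\neq0$ is defined by $\gamma''=\kappa\,\mathbf n$, where $\mathbf n$ is a unit (timelike) normal vector. *)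

theory Defs
  imports "HOL-Analysis.Analysis"
begin

definition linner :: "real^3 \<Rightarrow> real^3 \<Rightarrow> real" where
  "linner u w = u$1 * w$1 + u$2 * w$2 - u$3 * w$3"

definition linner2 :: "real^2 \<Rightarrow> real^2 \<Rightarrow> real" where
  "linner2 p q = p$1 * q$1 - p$2 * q$2"

text \<open>Lorentzian cross product: linner (lcross u w) u = 0 = linner (lcross u w) w.\<close>
definition lcross :: "real^3 \<Rightarrow> real^3 \<Rightarrow> real^3" where
  "lcross u w = vector [u$2 * w$3 - u$3 * w$2, u$3 * w$1 - u$1 * w$3, -(u$1 * w$2 - u$2 * w$1)]"

definition avec :: "real^3" where "avec = vector [0, 0, 1]"

definition d1 :: "(real \<Rightarrow> 'b::real_normed_vector) \<Rightarrow> real \<Rightarrow> 'b" where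
  "d1 f x = vector_derivative f (at x)"

definition Xs :: "(real \<Rightarrow> real \<Rightarrow> real^3) \<Rightarrow> real \<Rightarrow> real \<Rightarrow> real^3" where
  "Xs X s t = vector_derivative (\<lambda>s'. X s' t) (at s)"
definition Xt :: "(real \<Rightarrow> real \<Rightarrow> real^3) \<Rightarrow> real \<Rightarrow> real \<Rightarrow> real^3" where
  "Xt X s t = vector_derivative (\<lambda>t'. X s t') (at t)"
definition Xss :: "(real \<Rightarrow> real \<Rightarrow> real^3) \<Rightarrow> real \<Rightarrow> real \<Rightarrow> real^3" where
  "Xss X s t = vector_derivative (\<lambda>s'. Xs X s' t) (at s)"
definition Xst :: "(real \<Rightarrow> real \<Rightarrow> real^3) \<Rightarrow> real \<Rightarrow> real \<Rightarrow> real^3" where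
  "Xst X s t = vector_derivative (\<lambda>t'. Xs X s t') (at t)"
definition Xtt :: "(real \<Rightarrow> real \<Rightarrow> real^3) \<Rightarrow> real \<Rightarrow> real \<Rightarrow> real^3" where
  "Xtt X s t = vector_derivative (\<lambda>t'. Xt X s t') (at t)"

text \<open>Mean curvature H of the parametrized surface X with respect to the unit
  (timelike) normal N: the mean curvature vector is the trace of the second fundamental
  form sigma(u,w) = (normal part of D_u w) = - linner (D_u w) N * N, and H is defined by
  (mean curvature vector) = H N.\<close>
definition mean_curv :: "(real \<Rightarrow> real \<Rightarrow> real^3) \<Rightarrow> (real \<Rightarrow> real \<Rightarrow> real^3) \<Rightarrow> real \<Rightarrow> real \<Rightarrow> real" where
  "mean_curv X N s t =
    (let E = linner (Xs X s t) (Xs X s t); F = linner (Xs X s t) (Xt X s t);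
         G = linner (Xt X s t) (Xt X s t);
         e = linner (N s t) (Xss X s t); f = linner (N s t) (Xst X s t);
         g = linner (N s t) (Xtt X s t)
     in - (e * G - 2 * f * F + g * E) / (E * G - F^2))"

definition spacelike_surface ::
  "(real \<Rightarrow> real \<Rightarrow> real^3) \<Rightarrow> (real \<Rightarrow> real \<Rightarrow> real^3) \<Rightarrow> (real \<times> real) set \<Rightarrow> bool" where
  "spacelike_surface X N U \<longleftrightarrow> open U \<and>
     continuous_on U (\<lambda>(s,t). N s t) \<and>
     (\<forall>(s,t)\<in>U.
        (\<lambda>s'. X s' t) differentiable (at s) \<and> (\<lambda>t'. X s t') differentiable (at t) \<and>
        (\<lambda>s'. Xs X s' t) differentiable (at s) \<and> (\<lambda>t'. Xs X s t') differentiable (at t) \<and>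
        (\<lambda>t'. Xt X s t') differentiable (at t) \<and>
        linner (Xs X s t) (Xs X s t) > 0 \<and> linner (Xt X s t) (Xt X s t) > 0 \<and>
        linner (Xs X s t) (Xs X s t) * linner (Xt X s t) (Xt X s t)
          - (linner (Xs X s t) (Xt X s t))^2 > 0 \<and>
        linner (N s t) (N s t) = -1 \<and>
        linner (N s t) (Xs X s t) = 0 \<and> linner (N s t) (Xt X s t) = 0)"

definition alpha_singular_maximal ::
  "real \<Rightarrow> (real \<Rightarrow> real \<Rightarrow> real^3) \<Rightarrow> (real \<Rightarrow> real \<Rightarrow> real^3) \<Rightarrow> (real \<times> real) set \<Rightarrow> bool" where
  "alpha_singular_maximal \<alpha> X N U \<longleftrightarrow> spacelike_surface X N U \<and>
     (\<forall>(s,t)\<in>U. (X s t)$3 > 0 \<and>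
        mean_curv X N s t = \<alpha> * linner (N s t) avec / linner (X s t) avec)"

end

(* For a translation surface X(s,t) = \<gamma>(s) + t v the coordinate lines in t are straight, so
   X_t = v and X_st = X_tt = 0; with a unit-speed generatrix orthogonal to a unit v the mean
   curvature reduces to H = -<N, \<gamma>''>. If N = \<gamma>' \<times> v and \<gamma>'' = \<kappa> N this is H = \<kappa>.
   Spacelikeness gives <v,v> = 1 and, since N is unit timelike, <\<gamma>',v> = 0; the whole line
   \<gamma>(s) + t v lying in z > 0 forces v to be horizontal. Projecting onto the vertical plane
   orthogonal to v is an isometry on vectors orthogonal to v, which turns the singular maximal
   equation into the curve equation of the generatrix. Conversely, for a curve \<beta> in the
   xz-plane the unit normal n is, up to the sign c = +-1, the Lorentzian rotation of \<beta>' by a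
   right angle; taking that rotation as the (continuous) normal of the surface multiplies both
   sides of the singular maximal equation by c. *)

theory Submission
  imports Defs
begin

definition twice_differentiable_on :: "real set \<Rightarrow> (real \<Rightarrow> 'a::real_normed_vector) \<Rightarrow> bool" where
  "twice_differentiable_on S f \<longleftrightarrow> (\<forall>s\<in>S. f differentiable (at s) \<and> d1 f differentiable (at s))"

definition cylinder :: "(real \<Rightarrow> real^3) \<Rightarrow> real^3 \<Rightarrow> real \<Rightarrow> real \<Rightarrow> real^3" where
  "cylinder \<gamma> v = (\<lambda>s t. \<gamma> s + t *\<^sub>R v)"

lemma has_vector_derivative_d1:
  "f differentiable (at s) \<Longrightarrow> (f has_vector_derivative d1 f s) (at s)"
  unfolding d1_def by (simp add: vector_derivative_works)

lemma d1_linear: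
  fixes L :: "'a::euclidean_space \<Rightarrow> 'b::real_normed_vector"
  assumes "linear L" "f differentiable (at s)"
  shows "d1 (\<lambda>s. L (f s)) s = L (d1 f s)"
  unfolding d1_def[of "\<lambda>s. L (f s)"]
  using bounded_linear.has_vector_derivative[OF linear_conv_bounded_linear[THEN iffD1, OF assms(1)]
      has_vector_derivative_d1[OF assms(2)]]
  by (rule vector_derivative_at)

lemma has_vector_derivative_d1_linear:
  fixes L :: "'a::euclidean_space \<Rightarrow> 'b::real_normed_vector"
  assumes "linear L" "open S" "s \<in> S" "twice_differentiable_on S f"
  shows "(d1 (\<lambda>s. L (f s)) has_vector_derivative L (d1 (d1 f) s)) (at s)"
proof (rule has_vector_derivative_transform_within_open[OF _ assms(2,3)])
  have "bounded_linear L"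
    using assms(1) by (simp add: linear_conv_bounded_linear)
  moreover have "(d1 f has_vector_derivative d1 (d1 f) s) (at s)"
    using assms(3,4) by (simp add: twice_differentiable_on_def has_vector_derivative_d1)
  ultimately show "((\<lambda>s. L (d1 f s)) has_vector_derivative L (d1 (d1 f) s)) (at s)"
    by (rule bounded_linear.has_vector_derivative)
  show "\<And>s'. s' \<in> S \<Longrightarrow> L (d1 f s') = d1 (\<lambda>s. L (f s)) s'"
    using assms(1,4) by (simp add: d1_linear twice_differentiable_on_def)
qed

lemma twice_differentiable_on_linear:
  fixes L :: "'a::euclidean_space \<Rightarrow> 'b::real_normed_vector"
  assumes "linear L" "open S" "twice_differentiable_on S f"
  shows "twice_differentiable_on S (\<lambda>s. L (f s))"
  unfolding twice_differentiable_on_def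
proof
  fix s assume s: "s \<in> S"
  have "(f has_vector_derivative d1 f s) (at s)"
    using assms(3) s by (simp add: twice_differentiable_on_def has_vector_derivative_d1)
  with assms(1) have "((\<lambda>s. L (f s)) has_vector_derivative L (d1 f s)) (at s)"
    by (simp add: linear_conv_bounded_linear bounded_linear.has_vector_derivative)
  moreover have "(d1 (\<lambda>s. L (f s)) has_vector_derivative L (d1 (d1 f) s)) (at s)"
    by (rule has_vector_derivative_d1_linear[OF assms(1,2) s assms(3)])
  ultimately show "(\<lambda>s. L (f s)) differentiable (at s) \<and> d1 (\<lambda>s. L (f s)) differentiable (at s)"
    using differentiableI_vector by blast
qed

lemma d1_d1_linear:
  fixes L :: "'a::euclidean_space \<Rightarrow> 'b::real_normed_vector"
  assumes "linear L" "open S" "s \<in> S" "twice_differentiable_on S f"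
  shows "d1 (d1 (\<lambda>s. L (f s))) s = L (d1 (d1 f) s)"
  unfolding d1_def[of "d1 (\<lambda>s. L (f s))"]
  using has_vector_derivative_d1_linear[OF assms] by (rule vector_derivative_at)

lemma Xs_cylinder:
  assumes "\<gamma> differentiable (at s)"
  shows "Xs (cylinder \<gamma> v) s t = d1 \<gamma> s"
proof -
  have "((\<lambda>s. \<gamma> s + t *\<^sub>R v) has_vector_derivative d1 \<gamma> s + 0) (at s)"
    using assms by (intro has_vector_derivative_add has_vector_derivative_d1 has_vector_derivative_const)
  then show ?thesis
    unfolding Xs_def cylinder_def add_0_right by (rule vector_derivative_at)
qed

lemma Xt_cylinder: "Xt (cylinder \<gamma> v) s t = v"
proof -
  have "((\<lambda>t. \<gamma> s + t *\<^sub>R v) has_vector_derivative v) (at t)"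
    by (auto intro!: derivative_eq_intros)
  then show ?thesis
    unfolding Xt_def cylinder_def by (rule vector_derivative_at)
qed

lemma has_vector_derivative_Xs_cylinder:
  assumes "open S" "s \<in> S" "twice_differentiable_on S \<gamma>"
  shows "((\<lambda>s'. Xs (cylinder \<gamma> v) s' t) has_vector_derivative d1 (d1 \<gamma>) s) (at s)"
proof (rule has_vector_derivative_transform_within_open[OF _ assms(1,2)])
  show "(d1 \<gamma> has_vector_derivative d1 (d1 \<gamma>) s) (at s)"
    using assms by (simp add: twice_differentiable_on_def has_vector_derivative_d1)
  show "\<And>s'. s' \<in> S \<Longrightarrow> d1 \<gamma> s' = Xs (cylinder \<gamma> v) s' t"
    using assms by (simp add: Xs_cylinder twice_differentiable_on_def)
qed

lemma Xss_cylinder: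
  "open S \<Longrightarrow> s \<in> S \<Longrightarrow> twice_differentiable_on S \<gamma> \<Longrightarrow> Xss (cylinder \<gamma> v) s t = d1 (d1 \<gamma>) s"
  unfolding Xss_def by (rule vector_derivative_at) (rule has_vector_derivative_Xs_cylinder)

lemma Xst_cylinder:
  assumes "\<gamma> differentiable (at s)"
  shows "Xst (cylinder \<gamma> v) s t = 0"
proof -
  have "(\<lambda>t. Xs (cylinder \<gamma> v) s t) = (\<lambda>t. d1 \<gamma> s)"
    using assms by (simp add: Xs_cylinder)
  then show ?thesis
    unfolding Xst_def by simp
qed

lemma Xtt_cylinder: "Xtt (cylinder \<gamma> v) s t = 0"
proof -
  have "(\<lambda>t. Xt (cylinder \<gamma> v) s t) = (\<lambda>t. v)"
    by (simp add: Xt_cylinder)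
  then show ?thesis
    unfolding Xtt_def by simp
qed

lemma linner_scaleR_right: "linner x (c *\<^sub>R y) = c * linner x y"
  by (simp add: linner_def algebra_simps)

lemma linner_scaleR_left: "linner (c *\<^sub>R x) y = c * linner x y"
  by (simp add: linner_def algebra_simps)

lemma linner_zero_right [simp]: "linner x 0 = 0"
  by (simp add: linner_def)

lemma linner_lcross_self:
  "linner (lcross u w) (lcross u w) = (linner u w)\<^sup>2 - linner u u * linner w w"
  by (simp add: linner_def lcross_def power2_eq_square algebra_simps)

lemma linner_lcross_left: "linner (lcross u w) u = 0"
  by (simp add: linner_def lcross_def algebra_simps)

lemma linner_lcross_right: "linner (lcross u w) w = 0"
  by (simp add: linner_def lcross_def algebra_simps)

lemma mean_curv_cylinder:
  assumes "open S" "s \<in> S" "twice_differentiable_on S \<gamma>"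
    and "linner (d1 \<gamma> s) (d1 \<gamma> s) = 1" "linner (d1 \<gamma> s) v = 0" "linner v v = 1"
  shows "mean_curv (cylinder \<gamma> v) N s t = - linner (N s t) (d1 (d1 \<gamma>) s)"
proof -
  have "\<gamma> differentiable (at s)"
    using assms(2,3) by (simp add: twice_differentiable_on_def)
  then show ?thesis
    using assms by (simp add: mean_curv_def Xs_cylinder Xt_cylinder Xss_cylinder Xst_cylinder Xtt_cylinder)
qed

lemma spacelike_surface_cylinder:
  assumes "open S" "twice_differentiable_on S \<gamma>" "linner v v = 1"
    and "continuous_on (S \<times> UNIV) (\<lambda>(s, t). N s t)"
    and "\<And>s t. s \<in> S \<Longrightarrow> linner (d1 \<gamma> s) (d1 \<gamma> s) = 1 \<and> linner (d1 \<gamma> s) v = 0 \<and>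
      linner (N s t) (N s t) = -1 \<and> linner (N s t) (d1 \<gamma> s) = 0 \<and> linner (N s t) v = 0"
  shows "spacelike_surface (cylinder \<gamma> v) N (S \<times> UNIV)"
proof -
  have "(\<lambda>s'. cylinder \<gamma> v s' t) differentiable (at s) \<and> (\<lambda>t'. cylinder \<gamma> v s t') differentiable (at t) \<and>
      (\<lambda>s'. Xs (cylinder \<gamma> v) s' t) differentiable (at s) \<and>
      (\<lambda>t'. Xs (cylinder \<gamma> v) s t') differentiable (at t) \<and>
      Xs (cylinder \<gamma> v) s t = d1 \<gamma> s"
    if s: "s \<in> S" for s t
  proof -
    have "\<gamma> differentiable (at s)"
      using assms(2) s by (simp add: twice_differentiable_on_def)
    moreover have "(\<lambda>s'. Xs (cylinder \<gamma> v) s' t) differentiable (at s)"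
      using has_vector_derivative_Xs_cylinder[OF assms(1) s assms(2)] by (rule differentiableI_vector)
    moreover have "(\<lambda>t'. Xs (cylinder \<gamma> v) s t') = (\<lambda>t'. d1 \<gamma> s)"
      using \<open>\<gamma> differentiable (at s)\<close> by (simp add: Xs_cylinder)
    ultimately show ?thesis
      by (simp add: cylinder_def Xs_cylinder)
  qed
  moreover have "Xt (cylinder \<gamma> v) s = (\<lambda>t. v)" for s
    by (rule ext) (rule Xt_cylinder)
  ultimately show ?thesis
    using assms unfolding spacelike_surface_def by (auto intro: open_Times)
qed

definition horizontal_perp :: "real^3 \<Rightarrow> real^3" where
  "horizontal_perp v = vector [- v$2, v$1, 0]"

definition plane_chart :: "real^3 \<Rightarrow> real^3 \<Rightarrow> real^2" where
  "plane_chart w x = vector [linner x w, x$3]"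

lemma linear_plane_chart: "linear (plane_chart w)"
  by (rule linearI) (auto simp: plane_chart_def vec_eq_iff forall_2 linner_def algebra_simps)

lemma horizontal_perp:
  assumes "v$3 = 0" "linner v v = 1"
  shows "(horizontal_perp v)$3 = 0" "linner (horizontal_perp v) (horizontal_perp v) = 1"
    "linner (horizontal_perp v) v = 0"
  using assms by (simp_all add: horizontal_perp_def linner_def algebra_simps)

lemma linner2_plane_chart:
  assumes "v$3 = 0" "linner v v = 1"
  shows "linner2 (plane_chart (horizontal_perp v) x) (plane_chart (horizontal_perp v) y)
    = linner x y - linner x v * linner y v"
proof -
  have "linner2 (plane_chart (horizontal_perp v) x) (plane_chart (horizontal_perp v) y)
      - (linner x y - linner x v * linner y v) = (x$1 * y$1 + x$2 * y$2) * (linner v v - 1)"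
    using assms(1) unfolding plane_chart_def horizontal_perp_def linner2_def linner_def
    by (simp add: algebra_simps)
  then show ?thesis
    using assms(2) by simp
qed

lemma linner_avec: "linner x avec = - x$3"
  by (simp add: linner_def avec_def)

lemma horizontal_if_line_in_upper_halfspace:
  fixes p v :: "real^3"
  assumes "\<forall>t. 0 < (p + t *\<^sub>R v)$3"
  shows "v$3 = 0"
proof (rule ccontr)
  assume "v$3 \<noteq> 0"
  then have "(p + (- (p$3 + 1) / v$3) *\<^sub>R v)$3 = -1"
    by (simp add: field_simps)
  then show False
    using assms by (metis neg_0_less_iff_less not_one_less_zero)
qed

lemma singular_maximal_cylinder_conditions:
  assumes I: "open I" "s0 \<in> I" and \<gamma>: "twice_differentiable_on I \<gamma>" and v: "\<bar>linner v v\<bar> = 1"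
    and unit: "\<And>s. s \<in> I \<Longrightarrow> linner (d1 \<gamma> s) (d1 \<gamma> s) = 1"
    and curv: "\<And>s. s \<in> I \<Longrightarrow> d1 (d1 \<gamma>) s = \<kappa> s *\<^sub>R lcross (d1 \<gamma> s) v"
    and sing: "alpha_singular_maximal \<alpha> (cylinder \<gamma> v) (\<lambda>s t. lcross (d1 \<gamma> s) v) (I \<times> UNIV)"
  shows "v$3 = 0" and "linner v v = 1" and "\<And>s. s \<in> I \<Longrightarrow> linner (d1 \<gamma> s) v = 0"
    and "\<And>s. s \<in> I \<Longrightarrow> 0 < (\<gamma> s)$3 \<and>
      \<kappa> s = \<alpha> * linner (lcross (d1 \<gamma> s) v) avec / linner (\<gamma> s) avec"
proof -
  have pt: "0 < (cylinder \<gamma> v s t)$3 \<and> mean_curv (cylinder \<gamma> v) (\<lambda>s t. lcross (d1 \<gamma> s) v) s t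
      = \<alpha> * linner (lcross (d1 \<gamma> s) v) avec / linner (cylinder \<gamma> v s t) avec" if "s \<in> I" for s t
    using sing that unfolding alpha_singular_maximal_def by auto
  have sp: "0 < linner v v \<and> linner (lcross (d1 \<gamma> s) v) (lcross (d1 \<gamma> s) v) = -1" if "s \<in> I" for s
    using sing that unfolding alpha_singular_maximal_def spacelike_surface_def
    by (force simp: Xt_cylinder)
  show vv: "linner v v = 1"
    using sp[OF I(2)] v by linarith
  show orth: "linner (d1 \<gamma> s) v = 0" if "s \<in> I" for s
    using sp[OF that] unit[OF that] vv by (simp add: linner_lcross_self)
  show "v$3 = 0"
    using pt[OF I(2)] by (intro horizontal_if_line_in_upper_halfspace[of "\<gamma> s0"]) (simp add: cylinder_def)
  show "0 < (\<gamma> s)$3 \<and> \<kappa> s = \<alpha> * linner (lcross (d1 \<gamma> s) v) avec / linner (\<gamma> s) avec"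
    if s: "s \<in> I" for s
  proof -
    have "mean_curv (cylinder \<gamma> v) (\<lambda>s t. lcross (d1 \<gamma> s) v) s 0 = \<kappa> s"
      using mean_curv_cylinder[OF I(1) s \<gamma> unit[OF s] orth[OF s] vv] sp[OF s]
      by (simp add: curv[OF s] linner_scaleR_right)
    then show ?thesis
      using pt[OF s, of 0] by (simp add: cylinder_def)
  qed
qed

lemma generatrix_in_plane_chart:
  assumes "open I" "s \<in> I" "twice_differentiable_on I \<gamma>" "v$3 = 0" "linner v v = 1"
    and "linner (d1 \<gamma> s) (d1 \<gamma> s) = 1" "linner (d1 \<gamma> s) v = 0"
    and "d1 (d1 \<gamma>) s = \<kappa> *\<^sub>R lcross (d1 \<gamma> s) v"
  defines "P \<equiv> plane_chart (horizontal_perp v)"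
  shows "linner2 (d1 (\<lambda>s. P (\<gamma> s)) s) (d1 (\<lambda>s. P (\<gamma> s)) s) = 1"
    and "linner2 (P (lcross (d1 \<gamma> s) v)) (P (lcross (d1 \<gamma> s) v)) = -1"
    and "linner2 (P (lcross (d1 \<gamma> s) v)) (d1 (\<lambda>s. P (\<gamma> s)) s) = 0"
    and "d1 (d1 (\<lambda>s. P (\<gamma> s))) s = \<kappa> *\<^sub>R P (lcross (d1 \<gamma> s) v)"
proof -
  have P: "linear P"
    unfolding P_def by (rule linear_plane_chart)
  have d1_P: "d1 (\<lambda>s. P (\<gamma> s)) s = P (d1 \<gamma> s)"
    using assms(2,3) by (intro d1_linear[OF P]) (simp add: twice_differentiable_on_def)
  have P_iso: "linner2 (P x) (P y) = linner x y - linner x v * linner y v" for x y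
    unfolding P_def using assms(4,5) by (rule linner2_plane_chart)
  show "linner2 (d1 (\<lambda>s. P (\<gamma> s)) s) (d1 (\<lambda>s. P (\<gamma> s)) s) = 1"
    and "linner2 (P (lcross (d1 \<gamma> s) v)) (P (lcross (d1 \<gamma> s) v)) = -1"
    and "linner2 (P (lcross (d1 \<gamma> s) v)) (d1 (\<lambda>s. P (\<gamma> s)) s) = 0"
    using assms(5-7)
    by (simp_all add: d1_P P_iso linner_lcross_self linner_lcross_left linner_lcross_right)
  show "d1 (d1 (\<lambda>s. P (\<gamma> s))) s = \<kappa> *\<^sub>R P (lcross (d1 \<gamma> s) v)"
    using d1_d1_linear[OF P assms(1-3)] assms(8) by (simp add: linear_cmul[OF P])
qed

definition embed_xz :: "real^2 \<Rightarrow> real^3" where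
  "embed_xz x = vector [x$1, 0, x$2]"

definition lorentz2_perp :: "real^2 \<Rightarrow> real^2" where
  "lorentz2_perp p = vector [p$2, p$1]"

lemma linear_embed_xz: "linear embed_xz"
  by (rule linearI) (auto simp: embed_xz_def vec_eq_iff forall_3)

lemma linear_lorentz2_perp: "linear lorentz2_perp"
  by (rule linearI) (auto simp: lorentz2_perp_def vec_eq_iff forall_2)

lemma linner_embed_xz: "linner (embed_xz x) (embed_xz y) = linner2 x y"
  by (simp add: embed_xz_def linner_def linner2_def)

lemma linner2_lorentz2_perp_self: "linner2 (lorentz2_perp p) (lorentz2_perp p) = - linner2 p p"
  by (simp add: lorentz2_perp_def linner2_def)

lemma linner2_lorentz2_perp_left: "linner2 (lorentz2_perp p) p = 0"
  by (simp add: lorentz2_perp_def linner2_def)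

lemma lorentz2_perp_unit_normal:
  assumes "linner2 p p = 1" "linner2 n n = -1" "linner2 n p = 0"
  shows "\<exists>c. c\<^sup>2 = 1 \<and> lorentz2_perp p = c *\<^sub>R n"
proof -
  define c where "c = n$2 * p$1 - n$1 * p$2"
  have "n$1 * p$1 = n$2 * p$2" "(p$1)\<^sup>2 - (p$2)\<^sup>2 = 1" "(n$1)\<^sup>2 - (n$2)\<^sup>2 = -1"
    using assms by (simp_all add: linner2_def power2_eq_square)
  then have n: "n$1 = c * p$2" "n$2 = c * p$1"
    unfolding c_def by algebra+
  then have "c\<^sup>2 = 1"
    using \<open>(n$1)\<^sup>2 - (n$2)\<^sup>2 = -1\<close> \<open>(p$1)\<^sup>2 - (p$2)\<^sup>2 = 1\<close> by algebra
  moreover have "lorentz2_perp p = c *\<^sub>R n"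
    using n \<open>c\<^sup>2 = 1\<close> by (simp add: lorentz2_perp_def vec_eq_iff forall_2 power2_eq_square)
  ultimately show ?thesis by blast
qed

lemma continuous_on_d1:
  "twice_differentiable_on S f \<Longrightarrow> continuous_on S (d1 f)"
  unfolding twice_differentiable_on_def
  by (blast intro: continuous_at_imp_continuous_on differentiable_imp_continuous_within)

lemma singular_maximal_cylinder_of_generatrix:
  assumes I: "open I" and \<beta>: "twice_differentiable_on I \<beta>"
    and curve: "\<And>s. s \<in> I \<Longrightarrow> linner2 (d1 \<beta> s) (d1 \<beta> s) = 1 \<and> 0 < (\<beta> s)$2 \<and>
      linner2 (n s) (n s) = -1 \<and> linner2 (n s) (d1 \<beta> s) = 0 \<and> d1 (d1 \<beta>) s = \<kappa> s *\<^sub>R n s \<and>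
      \<kappa> s = - \<alpha> * linner2 (n s) (vector [0, 1]) / (\<beta> s)$2"
  defines "e \<equiv> vector [0, 1, 0] :: real^3"
  shows "alpha_singular_maximal \<alpha> (cylinder (\<lambda>s. embed_xz (\<beta> s)) e)
    (\<lambda>s t. embed_xz (lorentz2_perp (d1 \<beta> s))) (I \<times> UNIV)"
proof -
  let ?\<gamma> = "\<lambda>s. embed_xz (\<beta> s)" and ?N = "\<lambda>s t. embed_xz (lorentz2_perp (d1 \<beta> s))"
  have \<gamma>: "twice_differentiable_on I ?\<gamma>"
    by (rule twice_differentiable_on_linear[OF linear_embed_xz I \<beta>])
  have d1_\<gamma>: "d1 ?\<gamma> s = embed_xz (d1 \<beta> s)" if "s \<in> I" for s
    using that \<beta> by (simp add: d1_linear[OF linear_embed_xz] twice_differentiable_on_def)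
  have d2_\<gamma>: "d1 (d1 ?\<gamma>) s = \<kappa> s *\<^sub>R embed_xz (n s)" if "s \<in> I" for s
  proof -
    have "d1 (d1 \<beta>) s = \<kappa> s *\<^sub>R n s"
      using curve[OF that] by blast
    then show ?thesis
      by (simp add: d1_d1_linear[OF linear_embed_xz I that \<beta>] linear_cmul[OF linear_embed_xz])
  qed
  have e: "linner e e = 1" "linner (embed_xz x) e = 0" for x
    by (simp_all add: e_def embed_xz_def linner_def)
  \<comment> \<open>The given \<open>n\<close> need not be continuous, hence the normal is built from \<open>\<beta>'\<close>.\<close>
  have "continuous_on I (\<lambda>s. embed_xz (lorentz2_perp (d1 \<beta> s)))"
    by (intro linear_continuous_on_compose[OF _ linear_embed_xz]
        linear_continuous_on_compose[OF _ linear_lorentz2_perp] continuous_on_d1 \<beta>)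
  then have "continuous_on (I \<times> UNIV) (\<lambda>(s, t). ?N s t)"
    by (auto intro!: continuous_on_compose2[where f=fst] continuous_on_fst simp: case_prod_beta)
  moreover have "linner (d1 ?\<gamma> s) (d1 ?\<gamma> s) = 1 \<and> linner (d1 ?\<gamma> s) e = 0 \<and>
      linner (?N s t) (?N s t) = -1 \<and> linner (?N s t) (d1 ?\<gamma> s) = 0 \<and> linner (?N s t) e = 0"
    if "s \<in> I" for s t
    using curve[OF that]
    by (simp add: d1_\<gamma>[OF that] e linner_embed_xz linner2_lorentz2_perp_self linner2_lorentz2_perp_left)
  ultimately have "spacelike_surface (cylinder ?\<gamma> e) ?N (I \<times> UNIV)"
    by (intro spacelike_surface_cylinder[OF I \<gamma> e(1)])
  moreover have "0 < (cylinder ?\<gamma> e s t)$3 \<and> mean_curv (cylinder ?\<gamma> e) ?N s t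
      = \<alpha> * linner (?N s t) avec / linner (cylinder ?\<gamma> e s t) avec" if s: "s \<in> I" for s t
  proof -
    obtain c where "c\<^sup>2 = 1" "lorentz2_perp (d1 \<beta> s) = c *\<^sub>R n s"
      using lorentz2_perp_unit_normal[of "d1 \<beta> s" "n s"] curve[OF s] by blast
    then have c: "c * c = 1" "?N s t = c *\<^sub>R embed_xz (n s)"
      by (simp_all add: power2_eq_square linear_cmul[OF linear_embed_xz])
    have "linner2 (d1 \<beta> s) (d1 \<beta> s) = 1" "linner2 (n s) (n s) = -1"
      using curve[OF s] by blast+
    then have "mean_curv (cylinder ?\<gamma> e) ?N s t = c * \<kappa> s"
      using mean_curv_cylinder[OF I s \<gamma>, of e ?N t] c
      by (simp add: d1_\<gamma>[OF s] d2_\<gamma>[OF s] e linner_embed_xz linner_scaleR_left linner_scaleR_right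
          linner2_lorentz2_perp_self)
    then show ?thesis
      using curve[OF s] c(2)
      by (simp add: cylinder_def e_def embed_xz_def linner_avec linner2_def)
  qed
  ultimately show ?thesis
    unfolding alpha_singular_maximal_def by auto
qed

lemma singular_maximal_cylinder_generatrix:
  assumes I: "open I" "s0 \<in> I" and \<gamma>: "twice_differentiable_on I \<gamma>" and v: "\<bar>linner v v\<bar> = 1"
    and unit: "\<And>s. s \<in> I \<Longrightarrow> linner (d1 \<gamma> s) (d1 \<gamma> s) = 1"
    and curv: "\<And>s. s \<in> I \<Longrightarrow> d1 (d1 \<gamma>) s = \<kappa> s *\<^sub>R lcross (d1 \<gamma> s) v"
    and sing: "alpha_singular_maximal \<alpha> (cylinder \<gamma> v) (\<lambda>s t. lcross (d1 \<gamma> s) v) (I \<times> UNIV)"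
  shows "v$3 = 0 \<and> (\<exists>w. w$3 = 0 \<and> linner w w = 1 \<and> linner w v = 0 \<and>
    (let \<beta> = (\<lambda>s. plane_chart w (\<gamma> s)); n = (\<lambda>s. plane_chart w (lcross (d1 \<gamma> s) v))
     in \<forall>s\<in>I. linner2 (d1 \<beta> s) (d1 \<beta> s) = 1 \<and>
       linner2 (n s) (n s) = -1 \<and> linner2 (n s) (d1 \<beta> s) = 0 \<and>
       d1 (d1 \<beta>) s = \<kappa> s *\<^sub>R n s \<and> (\<beta> s)$2 > 0 \<and>
       \<kappa> s = - \<alpha> * linner2 (n s) (vector [0, 1]) / (\<beta> s)$2))"
proof -
  have v3: "v$3 = 0"
    using assms by (rule singular_maximal_cylinder_conditions(1))
  have vv: "linner v v = 1"
    using assms by (rule singular_maximal_cylinder_conditions(2))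
  have orth: "linner (d1 \<gamma> s) v = 0" if "s \<in> I" for s
    using assms that by (rule singular_maximal_cylinder_conditions(3))
  have geom: "0 < (\<gamma> s)$3 \<and> \<kappa> s = \<alpha> * linner (lcross (d1 \<gamma> s) v) avec / linner (\<gamma> s) avec"
    if "s \<in> I" for s
    using assms that by (rule singular_maximal_cylinder_conditions(4))
  show ?thesis
    unfolding Let_def
  proof (intro conjI exI[of _ "horizontal_perp v"] ballI)
    show "v$3 = 0" by (rule v3)
    show "(horizontal_perp v)$3 = 0" "linner (horizontal_perp v) (horizontal_perp v) = 1"
      "linner (horizontal_perp v) v = 0"
      using horizontal_perp[OF v3 vv] by simp_all
    fix s assume s: "s \<in> I"
    note chart = generatrix_in_plane_chart[OF I(1) s \<gamma> v3 vv unit[OF s] orth[OF s] curv[OF s]]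
    show "linner2 (d1 (\<lambda>s. plane_chart (horizontal_perp v) (\<gamma> s)) s)
        (d1 (\<lambda>s. plane_chart (horizontal_perp v) (\<gamma> s)) s) = 1"
      and "linner2 (plane_chart (horizontal_perp v) (lcross (d1 \<gamma> s) v))
        (plane_chart (horizontal_perp v) (lcross (d1 \<gamma> s) v)) = -1"
      and "linner2 (plane_chart (horizontal_perp v) (lcross (d1 \<gamma> s) v))
        (d1 (\<lambda>s. plane_chart (horizontal_perp v) (\<gamma> s)) s) = 0"
      and "d1 (d1 (\<lambda>s. plane_chart (horizontal_perp v) (\<gamma> s))) s
        = \<kappa> s *\<^sub>R plane_chart (horizontal_perp v) (lcross (d1 \<gamma> s) v)"
      by (fact chart)+
    show "0 < (plane_chart (horizontal_perp v) (\<gamma> s))$2"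
      and "\<kappa> s = - \<alpha> * linner2 (plane_chart (horizontal_perp v) (lcross (d1 \<gamma> s) v)) (vector [0, 1])
        / (plane_chart (horizontal_perp v) (\<gamma> s))$2"
      using geom[OF s] by (simp_all add: plane_chart_def linner2_def linner_avec)
  qed
qed

theorem proposition2p1:
  fixes \<alpha> :: real
  assumes "\<alpha> \<noteq> 0"
  shows
   "(\<forall>(\<gamma>::real \<Rightarrow> real^3) (v::real^3) (\<kappa>::real \<Rightarrow> real) (a::real) (b::real).
      a < b \<and>
      \<bar>linner v v\<bar> = 1 \<and>
      (\<forall>s\<in>{a<..<b}. \<gamma> differentiable (at s) \<and> d1 \<gamma> differentiable (at s) \<and>
                     linner (d1 \<gamma> s) (d1 \<gamma> s) = 1) \<and>
      (\<exists>c. \<forall>s\<in>{a<..<b}. linner (\<gamma> s) v = c) \<and>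
      (\<forall>s\<in>{a<..<b}. d1 (d1 \<gamma>) s = \<kappa> s *\<^sub>R lcross (d1 \<gamma> s) v \<and> \<kappa> s \<noteq> 0) \<and>
      alpha_singular_maximal \<alpha> (\<lambda>s t. \<gamma> s + t *\<^sub>R v) (\<lambda>s t. lcross (d1 \<gamma> s) v)
        ({a<..<b} \<times> UNIV)
    \<longrightarrow>
      v$3 = 0 \<and>
      (\<exists>c. \<forall>s\<in>{a<..<b}. linner (\<gamma> s) v = c) \<and>
      (\<exists>w::real^3. w$3 = 0 \<and> linner w w = 1 \<and> linner w v = 0 \<and>
         (let \<beta> = (\<lambda>s. vector [linner (\<gamma> s) w, (\<gamma> s)$3] :: real^2);
              n = (\<lambda>s. vector [linner (lcross (d1 \<gamma> s) v) w, (lcross (d1 \<gamma> s) v)$3] :: real^2)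
          in \<forall>s\<in>{a<..<b}.
               linner2 (d1 \<beta> s) (d1 \<beta> s) = 1 \<and>
               linner2 (n s) (n s) = -1 \<and> linner2 (n s) (d1 \<beta> s) = 0 \<and>
               d1 (d1 \<beta>) s = \<kappa> s *\<^sub>R n s \<and> (\<beta> s)$2 > 0 \<and>
               \<kappa> s = - \<alpha> * linner2 (n s) (vector [0, 1]) / (\<beta> s)$2)))
   \<and>
   (\<forall>(\<beta>::real \<Rightarrow> real^2) (n::real \<Rightarrow> real^2) (\<kappa>::real \<Rightarrow> real) (a::real) (b::real).
      a < b \<and>
      (\<forall>s\<in>{a<..<b}. \<beta> differentiable (at s) \<and> d1 \<beta> differentiable (at s) \<and>
         linner2 (d1 \<beta> s) (d1 \<beta> s) = 1 \<and> (\<beta> s)$2 > 0 \<and>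
         linner2 (n s) (n s) = -1 \<and> linner2 (n s) (d1 \<beta> s) = 0 \<and>
         d1 (d1 \<beta>) s = \<kappa> s *\<^sub>R n s \<and> \<kappa> s \<noteq> 0 \<and>
         \<kappa> s = - \<alpha> * linner2 (n s) (vector [0, 1]) / (\<beta> s)$2)
    \<longrightarrow>
      (\<exists>N. alpha_singular_maximal \<alpha>
              (\<lambda>s t. vector [(\<beta> s)$1, 0, (\<beta> s)$2] + t *\<^sub>R vector [0, 1, 0]) N
              ({a<..<b} \<times> UNIV)))"
  apply (rule conjI; intro allI impI; elim conjE)
  subgoal for \<gamma> v \<kappa> a b
    using singular_maximal_cylinder_generatrix[of "{a<..<b}" "(a + b) / 2" \<gamma> v \<kappa> \<alpha>]
    by (simp add: twice_differentiable_on_def cylinder_def plane_chart_def)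
  subgoal for \<beta> n \<kappa> a b
    using singular_maximal_cylinder_of_generatrix[of "{a<..<b}" \<beta> n \<kappa> \<alpha>]
    by (auto simp: twice_differentiable_on_def cylinder_def embed_xz_def)
  done

end
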